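(* Let $r>\frac12$ and let $y(s,r)=s+\mathop{K}_{n=1}^{\infty}\left(\dfrac{(2n-1)^2r^2-(r-1)^2}{2s}\right)$ for $s>0$; this is a positive continuous function with $y(s,r)>s$ and $y(s,r)\,y(s+2r,r)=(s+1)(s+2r-1)$ for $s>0$. Then the functional equation $$f(s,r)+f(s+2r,r)=\frac{1}{s+1}+\frac{1}{s+2r-1}=\frac{2(s+r)}{(s+1)(s+2r-1)}\qquad(s>0)$$ has a unique solution satisfying $\lim_{s\to\infty}f(s,r)=0$, and this solution is $f(s,r)=\frac{\partial}{\partial s}(\ln y)(s,r)$.
   Context: $\mathop{K}_{n=1}^{\infty}\left(\frac{a_n}{b}\right)$ denotes the continued fraction $\cfrac{a_1}{b+\cfrac{a_2}{b+\cdots}}$ (limit of convergents). *)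

theory Defs
  imports "HOL-Analysis.Analysis"
begin

fun cf_tail :: "(nat \<Rightarrow> real) \<Rightarrow> real \<Rightarrow> nat \<Rightarrow> nat \<Rightarrow> real" where
  "cf_tail a b 0 k = 0"
| "cf_tail a b (Suc m) k = a k / (b + cf_tail a b m (Suc k))"

definition cf_convergent :: "(nat \<Rightarrow> real) \<Rightarrow> real \<Rightarrow> nat \<Rightarrow> real" where
  "cf_convergent a b N = cf_tail a b N 1"

definition cfrac :: "(nat \<Rightarrow> real) \<Rightarrow> real \<Rightarrow> real" where
  "cfrac a b = lim (cf_convergent a b)"

definition cf_num :: "real \<Rightarrow> nat \<Rightarrow> real" where
  "cf_num r n = (2 * real n - 1)^2 * r^2 - (r - 1)^2"

definition y_cf :: "real \<Rightarrow> real \<Rightarrow> real" where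
  "y_cf s r = s + cfrac (cf_num r) (2 * s)"

end

theory Submission
  imports Defs "HOL-Real_Asymp.Real_Asymp"
begin

text \<open>The partial numerators of \<open>y\<close> are positive and grow quadratically, so the convergents
  are the partial sums of an alternating series with terms decreasing to zero: the continued
  fraction converges to a positive value and \<open>y(s, r) > s\<close>. A Bauer--Muir transformation with
  modifiers \<open>w\<^sub>n = 2rn - s\<close> turns the fraction at \<open>s\<close> into the one at \<open>s + 2r\<close>, which gives
  \<open>y(s, r) y(s + 2r, r) = (s + 1)(s + 2r - 1)\<close>. The function
  \<open>4r \<Gamma>(\<alpha> + 1/2) \<Gamma>(\<beta> + 1/2) / (\<Gamma>(\<alpha>) \<Gamma>(\<beta>))\<close>, \<open>\<alpha> = (s + 1)/4r\<close>, \<open>\<beta> = (s + 2r - 1)/4r\<close>, satisfies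
  the same relation, so the difference of the logarithms changes sign under \<open>s \<mapsto> s + 2r\<close>;
  log-convexity of \<open>\<Gamma>\<close> and \<open>y(s, r) > s\<close> squeeze it to \<open>0\<close> at infinity, so it vanishes. Hence
  \<open>\<partial>\<^sub>s ln y\<close> is a nonnegative combination of digamma differences that solves the functional
  equation and tends to \<open>0\<close>; any other solution tending to \<open>0\<close> differs from it by a function
  that changes sign under \<open>s \<mapsto> s + 2r\<close> and tends to \<open>0\<close>, hence by zero.\<close>

section \<open>Convergents of continued fractions with positive terms\<close>

text \<open>Wallis recurrences, shifted by one index against the classical \<open>A\<^sub>-\<^sub>1 = 1, B\<^sub>-\<^sub>1 = 0\<close>:
  the \<open>n\<close>-th convergent is \<open>cf_A a b (Suc n) / cf_B a b (Suc n)\<close>.\<close>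

fun cf_A :: "(nat \<Rightarrow> real) \<Rightarrow> real \<Rightarrow> nat \<Rightarrow> real" where
  "cf_A a b 0 = 1"
| "cf_A a b (Suc 0) = 0"
| "cf_A a b (Suc (Suc n)) = b * cf_A a b (Suc n) + a (Suc n) * cf_A a b n"

fun cf_B :: "(nat \<Rightarrow> real) \<Rightarrow> real \<Rightarrow> nat \<Rightarrow> real" where
  "cf_B a b 0 = 0"
| "cf_B a b (Suc 0) = 1"
| "cf_B a b (Suc (Suc n)) = b * cf_B a b (Suc n) + a (Suc n) * cf_B a b n"

fun cf_tail_mod :: "(nat \<Rightarrow> real) \<Rightarrow> real \<Rightarrow> real \<Rightarrow> nat \<Rightarrow> nat \<Rightarrow> real" where
  "cf_tail_mod a b w 0 k = w"
| "cf_tail_mod a b w (Suc m) k = a k / (b + cf_tail_mod a b w m (Suc k))"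

lemma cf_tail_eq_cf_tail_mod_0: "cf_tail a b m k = cf_tail_mod a b 0 m k"
  by (induction m arbitrary: k) auto

lemma cf_tail_mod_Suc_inner:
  "cf_tail_mod a b w (Suc m) k = cf_tail_mod a b (a (k + m) / (b + w)) m k"
  by (induction m arbitrary: k) auto

definition num_prod :: "(nat \<Rightarrow> real) \<Rightarrow> nat \<Rightarrow> real" where
  "num_prod a n = (\<Prod>k<n. a (Suc k))"

lemma num_prod_Suc: "num_prod a (Suc n) = num_prod a n * a (Suc n)"
  by (simp add: num_prod_def)

lemma cf_det:
  "cf_A a b n * cf_B a b (Suc n) - cf_A a b (Suc n) * cf_B a b n = (-1)^n * num_prod a n"
proof (induction n)
  case 0
  then show ?case by (simp add: num_prod_def)
next
  case (Suc n)
  have "cf_A a b (Suc n) * cf_B a b (Suc (Suc n)) - cf_A a b (Suc (Suc n)) * cf_B a b (Suc n)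
      = - a (Suc n) * (cf_A a b n * cf_B a b (Suc n) - cf_A a b (Suc n) * cf_B a b n)"
    by (simp add: algebra_simps)
  with Suc show ?case by (simp add: num_prod_def)
qed

definition cf_Q :: "(nat \<Rightarrow> real) \<Rightarrow> real \<Rightarrow> nat \<Rightarrow> real" where
  "cf_Q a b n = cf_B a b (Suc n) * cf_B a b n / num_prod a n"

lemma mediant_dist_le:
  fixes A1 A2 B1 B2 w L :: real
  assumes B1: "B1 > 0" and B2: "B2 > 0" and w: "w \<ge> 0"
  shows "\<bar>(A1 + w*A2)/(B1 + w*B2) - L\<bar> \<le> \<bar>A1/B1 - L\<bar> + \<bar>A2/B2 - L\<bar>"
proof -
  define x where "x = A1/B1 - L"
  define y where "y = A2/B2 - L"
  define D where "D = B1 + w*B2"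
  have wB2: "w*B2 \<ge> 0" using w B2 by simp
  have D: "D > 0" using B1 wB2 by (simp add: D_def)
  have A1: "A1 = B1*(x+L)" and A2: "A2 = B2*(y+L)" using B1 B2 by (simp_all add: x_def y_def)
  have "(A1 + w*A2)/(B1 + w*B2) - L = (B1*x + (w*B2)*y) / D"
    using D unfolding D_def A1 A2 by (simp add: field_simps)
  moreover have "\<bar>B1*x + (w*B2)*y\<bar> \<le> D*\<bar>x\<bar> + D*\<bar>y\<bar>"
  proof -
    have "\<bar>B1*x + (w*B2)*y\<bar> \<le> B1*\<bar>x\<bar> + (w*B2)*\<bar>y\<bar>"
      using B1 wB2 by (metis abs_mult abs_of_nonneg abs_triangle_ineq less_imp_le)
    also have "\<dots> \<le> D*\<bar>x\<bar> + D*\<bar>y\<bar>"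
      using B1 wB2 by (intro add_mono mult_right_mono) (auto simp: D_def)
    finally show ?thesis .
  qed
  then have "\<bar>B1*x + (w*B2)*y\<bar> / D \<le> \<bar>x\<bar> + \<bar>y\<bar>"
    using D by (simp add: divide_simps algebra_simps)
  ultimately show ?thesis using D by (simp add: x_def y_def)
qed

locale cf_positive =
  fixes a :: "nat \<Rightarrow> real" and b :: real
  assumes b_pos: "b > 0" and a_pos: "\<And>k. a k > 0"
begin

abbreviation "A \<equiv> cf_A a b"
abbreviation "B \<equiv> cf_B a b"
abbreviation "Q \<equiv> cf_Q a b"

lemma B_pos: "B (Suc n) > 0" and B_nonneg: "B n \<ge> 0"
proof -
  have "B (Suc n) > 0 \<and> B n \<ge> 0"
  proof (induction n)
    case (Suc n)
    then show ?case using b_pos a_pos[of "Suc n"] by (simp add: add_pos_nonneg)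
  qed simp
  then show "B (Suc n) > 0" "B n \<ge> 0" by auto
qed

lemma A_nonneg: "A n \<ge> 0"
proof -
  have "A n \<ge> 0 \<and> A (Suc n) \<ge> 0"
  proof (induction n)
    case (Suc n)
    then show ?case using b_pos a_pos[of "Suc n"] by simp
  qed simp
  then show ?thesis by simp
qed

lemma num_prod_pos: "num_prod a n > 0"
  unfolding num_prod_def by (intro prod_pos) (use a_pos in auto)

lemma cf_tail_mod_eq:
  assumes "w \<ge> 0"
  shows "cf_tail_mod a b w n 1 = (A (Suc n) + w * A n) / (B (Suc n) + w * B n)"
  using assms
proof (induction n arbitrary: w)
  case 0
  then show ?case by simp
next
  case (Suc n)
  define t where "t = a (Suc n) / (b + w)"
  have bw: "b + w > 0" using b_pos Suc.prems by linarith
  have "t \<ge> 0" using a_pos[of "Suc n"] bw by (simp add: t_def)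
  have "cf_tail_mod a b w (Suc n) 1 = cf_tail_mod a b t n 1"
    using cf_tail_mod_Suc_inner[of a b w n 1] by (simp add: t_def)
  also have "\<dots> = (A (Suc n) + t * A n) / (B (Suc n) + t * B n)"
    using Suc.IH[OF \<open>t \<ge> 0\<close>] .
  also have "\<dots> = ((b + w) * (A (Suc n) + t * A n)) / ((b + w) * (B (Suc n) + t * B n))"
    using bw by simp
  also have "(b + w) * (A (Suc n) + t * A n) = A (Suc (Suc n)) + w * A (Suc n)"
    using bw by (simp add: t_def field_simps)
  also have "(b + w) * (B (Suc n) + t * B n) = B (Suc (Suc n)) + w * B (Suc n)"
    using bw by (simp add: t_def field_simps)
  finally show ?case .
qed

lemma cf_convergent_eq: "cf_convergent a b n = A (Suc n) / B (Suc n)"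
  using cf_tail_mod_eq[of 0 n] by (simp add: cf_convergent_def cf_tail_eq_cf_tail_mod_0)

lemma Q_0: "Q 0 = 0"
  by (simp add: cf_Q_def)

lemma Q_Suc: "Q (Suc n) = Q n + b * B (Suc n)^2 / num_prod a (Suc n)"
  using num_prod_pos[of n] a_pos[of "Suc n"]
  unfolding cf_Q_def num_prod_Suc by (simp add: field_simps power2_eq_square)

lemma Q_less_Suc: "Q n < Q (Suc n)"
  using Q_Suc[of n] b_pos B_pos[of n] num_prod_pos[of "Suc n"] by simp

lemma Q_mono: "m \<le> n \<Longrightarrow> Q m \<le> Q n"
  by (induction n rule: dec_induct) (auto intro: order.trans less_imp_le[OF Q_less_Suc])

lemma Q_pos: "Q (Suc n) > 0"
  using Q_mono[of 0 n] Q_less_Suc[of n] Q_0 by simp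

lemma cf_convergent_diff:
  "cf_convergent a b (Suc n) - cf_convergent a b n = (-1)^n / Q (Suc n)"
proof -
  have B1: "B (Suc n) > 0" and B2: "B (Suc (Suc n)) > 0" using B_pos by blast+
  have "cf_convergent a b (Suc n) - cf_convergent a b n
      = (A (Suc (Suc n)) * B (Suc n) - A (Suc n) * B (Suc (Suc n))) / (B (Suc (Suc n)) * B (Suc n))"
    using B1 B2 by (simp add: cf_convergent_eq field_simps)
  also have "\<dots> = (-1)^n * num_prod a (Suc n) / (B (Suc (Suc n)) * B (Suc n))"
    using cf_det[of a b "Suc n"] by (simp add: algebra_simps)
  also have "\<dots> = (-1)^n / Q (Suc n)"
    using num_prod_pos[of "Suc n"] B1 B2 by (simp add: cf_Q_def field_simps)
  finally show ?thesis .
qed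

lemma cf_convergent_eq_alternating_sum:
  "cf_convergent a b n = (\<Sum>i<n. (-1)^i * (1 / Q (Suc i)))"
  by (induction n) (simp_all add: cf_convergent_def cf_convergent_diff[symmetric])

lemma cf_convergent_tendsto_cfrac:
  assumes "filterlim Q at_top sequentially"
  shows "cf_convergent a b \<longlonglongrightarrow> cfrac a b" and "cfrac a b > 0"
proof -
  define c where "c i = 1 / Q (Suc i)" for i
  have "filterlim (\<lambda>i. Q (Suc i)) at_top sequentially"
    using filterlim_compose[OF assms filterlim_Suc] by (simp add: o_def)
  then have "c \<longlonglongrightarrow> 0"
    unfolding c_def using tendsto_inverse_0_at_top by (simp add: inverse_eq_divide)
  moreover have "\<And>n. 0 \<le> c n" using Q_pos by (simp add: c_def less_imp_le)
  moreover have "\<And>n. c (Suc n) \<le> c n"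
    unfolding c_def using Q_pos Q_less_Suc by (simp add: frac_le less_imp_le)
  ultimately have leibniz: "summable (\<lambda>n. (-1)^n * c n)"
    "(\<Sum>i<2*1. (-1)^i * c i) \<le> (\<Sum>i. (-1)^i * c i)"
    by (rule summable_Leibniz')+
  have lim: "cf_convergent a b \<longlonglongrightarrow> (\<Sum>i. (-1)^i * c i)"
    using summable_LIMSEQ[OF leibniz(1)]
    by (simp add: c_def cf_convergent_eq_alternating_sum[abs_def])
  then show "cf_convergent a b \<longlonglongrightarrow> cfrac a b"
    by (simp add: cfrac_def limI)
  have "c 1 < c 0"
    unfolding c_def using Q_pos[of 0] Q_less_Suc[of 1] by (simp add: frac_less2)
  then have "0 < (\<Sum>i<2*1. (-1)^i * c i)" by (simp add: numeral_2_eq_2)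
  also have "\<dots> \<le> (\<Sum>i. (-1)^i * c i)" using leibniz(2) .
  also have "\<dots> = cfrac a b" unfolding cfrac_def using lim by (rule limI[symmetric])
  finally show "cfrac a b > 0" .
qed

text \<open>The ratio condition makes \<open>B\<^sub>2\<^sub>k\<^sub>+\<^sub>1\<^sup>2 / (a\<^sub>1\<cdots>a\<^sub>2\<^sub>k\<^sub>+\<^sub>1)\<close> decay no faster than
  \<open>1 / (2k+1)\<close>, so \<open>Q\<close> grows at least like the harmonic series.\<close>

lemma B_odd_sq_ge:
  assumes ratio: "\<And>k. a (2*k+3) * (2*k+1) \<le> a (2*k+2) * (2*k+3)"
  shows "B (2*k+1)^2 / num_prod a (2*k+1) \<ge> 1 / (a 1 * (2*k+1))"
proof (induction k)
  case 0
  then show ?case by (simp add: num_prod_def)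
next
  case (Suc k)
  define g where "g k = B (2*k+1)^2 / num_prod a (2*k+1)" for k
  have a1: "a 1 > 0" and a2: "a (2*k+2) > 0" and a3: "a (2*k+3) > 0" using a_pos by auto
  have P: "num_prod a (2*k+1) > 0" using num_prod_pos by blast
  have P_Suc: "num_prod a (2*Suc k+1) = num_prod a (2*k+1) * a (2*k+2) * a (2*k+3)"
    by (simp add: num_prod_def numeral_3_eq_3 numeral_2_eq_2 mult.assoc)
  have B_ge: "B (2*Suc k+1) \<ge> a (2*k+2) * B (2*k+1)"
    using b_pos B_nonneg[of "2*k+2"] by (simp add: numeral_3_eq_3 numeral_2_eq_2 add_increasing)
  have "1 / (a 1 * (2*Suc k+1)) = 1 / (a 1 * (2*k+1)) * ((2*k+1) / (2*k+3))"
    using a1 by (simp add: divide_simps)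
  also have "\<dots> \<le> g k * (a (2*k+2) / a (2*k+3))"
  proof (rule mult_mono)
    show "(2*k+1) / (2*k+3) \<le> a (2*k+2) / a (2*k+3)"
      using ratio[of k] a3 by (simp add: divide_simps mult.commute add.commute)
  qed (use Suc.IH a2 a3 P in \<open>auto simp: g_def simp del: cf_B.simps\<close>)
  also have "\<dots> = (a (2*k+2) * B (2*k+1))^2 / (num_prod a (2*k+1) * a (2*k+2) * a (2*k+3))"
    unfolding g_def using a2 a3 P by (simp add: field_simps power2_eq_square del: cf_B.simps)
  also have "\<dots> \<le> g (Suc k)"
    unfolding g_def P_Suc using B_ge B_nonneg[of "2*k+1"] a2 a3 P
    by (intro divide_right_mono power_mono) auto
  finally show ?case unfolding g_def .
qed

lemma Q_even_ge_harm:
  assumes ratio: "\<And>k. a (2*k+3) * (2*k+1) \<le> a (2*k+2) * (2*k+3)"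
  shows "Q (2*K) \<ge> b / (2 * a 1) * harm K"
proof (induction K)
  case 0
  then show ?case by (simp add: Q_0 harm_def)
next
  case (Suc K)
  define g where "g = B (2*K+1)^2 / num_prod a (2*K+1)"
  have a1: "a 1 > 0" using a_pos by blast
  have "c * harm (Suc K) = c * harm K + c / real (Suc K)" for c :: real
    by (simp add: harm_Suc distrib_left divide_inverse)
  then have "b / (2 * a 1) * harm (Suc K) = b / (2 * a 1) * harm K + b / (2 * a 1 * real (Suc K))"
    by simp
  moreover have "b / (2 * a 1 * real (Suc K)) \<le> b / (a 1 * real (2*K+1))"
  proof (rule frac_le)
    show "a 1 * real (2*K+1) \<le> 2 * a 1 * real (Suc K)" using a1 by (simp add: algebra_simps)
  qed (use a1 b_pos in simp_all)
  moreover have "b / (a 1 * real (2*K+1)) \<le> b * g"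
    using mult_left_mono[OF B_odd_sq_ge[OF ratio, of K] less_imp_le[OF b_pos]]
    unfolding g_def by simp
  moreover have "Q (Suc (2*K)) = Q (2*K) + b * g"
    using Q_Suc[of "2*K"] by (simp add: g_def)
  moreover have "Q (Suc (2*K)) \<le> Q (2 * Suc K)"
    using Q_less_Suc[of "Suc (2*K)"] by simp
  ultimately show ?case using Suc.IH by linarith
qed

lemma Q_tendsto_at_top:
  assumes ratio: "\<And>k. a (2*k+3) * (2*k+1) \<le> a (2*k+2) * (2*k+3)"
  shows "filterlim Q at_top sequentially"
  unfolding filterlim_at_top
proof
  fix Z
  have "b / (2 * a 1) > 0" using b_pos a_pos by simp
  then have "filterlim (\<lambda>K. b / (2 * a 1) * harm K) at_top sequentially"
    using filterlim_tendsto_pos_mult_at_top[OF tendsto_const _ harm_at_top] by blast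
  then obtain K0 where K0: "\<And>K. K \<ge> K0 \<Longrightarrow> b / (2 * a 1) * harm K \<ge> Z"
    by (auto simp: filterlim_at_top eventually_sequentially)
  show "eventually (\<lambda>n. Q n \<ge> Z) sequentially"
    unfolding eventually_sequentially
  proof (intro exI allI impI)
    fix n assume "n \<ge> 2*K0"
    then have "Z \<le> b / (2 * a 1) * harm (n div 2)" using K0 by simp
    also have "\<dots> \<le> Q (2 * (n div 2))" by (rule Q_even_ge_harm[OF ratio])
    also have "\<dots> \<le> Q n" by (rule Q_mono) simp
    finally show "Q n \<ge> Z" .
  qed
qed

lemma modified_convergents_tendsto:
  assumes lim: "cf_convergent a b \<longlonglongrightarrow> L" and w: "eventually (\<lambda>n. w n \<ge> 0) sequentially"
  shows "(\<lambda>n. (A (Suc (Suc n)) + w n * A (Suc n)) / (B (Suc (Suc n)) + w n * B (Suc n))) \<longlonglongrightarrow> L"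
proof -
  define e where "e n = \<bar>cf_convergent a b n - L\<bar>" for n
  have "e \<longlonglongrightarrow> 0"
    unfolding e_def using tendsto_rabs_zero[OF LIM_zero[OF lim]] .
  then have "(\<lambda>n. e (Suc n) + e n) \<longlonglongrightarrow> 0"
    using tendsto_add[OF LIMSEQ_Suc] by fastforce
  then show ?thesis
  proof (rule Lim_null_comparison[THEN LIM_zero_cancel, rotated])
    show "eventually (\<lambda>n.
        norm ((A (Suc (Suc n)) + w n * A (Suc n)) / (B (Suc (Suc n)) + w n * B (Suc n)) - L)
          \<le> e (Suc n) + e n) sequentially"
      using w by eventually_elim
        (simp add: e_def cf_convergent_eq mediant_dist_le[OF B_pos B_pos] del: cf_A.simps cf_B.simps)
  qed
qed

end

section \<open>A Bauer--Muir transformation\<close>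

lemma linear_recurrence_eq_0:
  fixes V :: "nat \<Rightarrow> real"
  assumes "\<And>m. V (Suc (Suc m)) = c * V (Suc m) + d m * V m" and "V 0 = 0" and "V 1 = 0"
  shows "V n = 0"
proof -
  have "V n = 0 \<and> V (Suc n) = 0"
    by (induction n) (use assms in auto)
  then show ?thesis by simp
qed

lemma bauer_muir_recurrence:
  fixes U w a :: "nat \<Rightarrow> real"
  assumes U: "\<And>j. U (Suc (Suc j)) = b * U (Suc j) + a (Suc j) * U j"
    and a: "\<And>j. a (Suc (Suc j)) = b' * w (Suc j) + a (Suc j) - b * w j"
    and w: "\<And>j. w (Suc (Suc j)) = w j + (b' - b)"
  shows "U (Suc (Suc (Suc m))) + w (Suc (Suc m)) * U (Suc (Suc m))
       = b' * (U (Suc (Suc m)) + w (Suc m) * U (Suc m)) + a (Suc m) * (U (Suc m) + w m * U m)"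
  unfolding U[of "Suc m"] a[of m] w[of m] U[of m] by (simp add: algebra_simps)

lemma cf_num_pos:
  assumes "r > 1/2"
  shows "cf_num r k > 0"
proof -
  have "(2 * real k - 1)^2 \<ge> 1" if "k > 0"
    using that by (simp add: one_le_power)
  then have "(2 * real k - 1)^2 * r^2 \<ge> r^2"
    by (cases "k = 0") (simp_all add: mult_le_cancel_right1)
  moreover have "r^2 - (r - 1)^2 = 2*r - 1"
    by (simp add: power2_eq_square algebra_simps)
  ultimately show ?thesis
    unfolding cf_num_def using assms by linarith
qed

lemma cf_num_1: "cf_num r 1 = 2*r - 1"
  by (simp add: cf_num_def power2_eq_square algebra_simps)

lemma cf_positive_cf_num: "r > 1/2 \<Longrightarrow> s > 0 \<Longrightarrow> cf_positive (cf_num r) (2 * s)"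
  by unfold_locales (simp_all add: cf_num_pos)

lemma cf_num_convergents_tendsto:
  assumes "r > 1/2" and "s > 0"
  shows "cf_convergent (cf_num r) (2 * s) \<longlonglongrightarrow> cfrac (cf_num r) (2 * s)"
    and "cfrac (cf_num r) (2 * s) > 0"
proof -
  interpret cf_positive "cf_num r" "2 * s"
    using assms by (rule cf_positive_cf_num)
  have "cf_num r (2*k+3) * (2*k+1) \<le> cf_num r (2*k+2) * (2*k+3)" for k
  proof -
    have "cf_num r (2*k+2) * (2*k+3) - cf_num r (2*k+3) * (2*k+1) = 2 * (2*r - 1)"
      by (simp add: cf_num_def algebra_simps power2_eq_square)
    then show ?thesis using assms(1) by simp
  qed
  then have "filterlim (cf_Q (cf_num r) (2 * s)) at_top sequentially"
    by (intro Q_tendsto_at_top) simp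
  then show "cf_convergent (cf_num r) (2 * s) \<longlonglongrightarrow> cfrac (cf_num r) (2 * s)"
    and "cfrac (cf_num r) (2 * s) > 0"
    by (rule cf_convergent_tendsto_cfrac)+
qed

lemma y_cf_gt: "r > 1/2 \<Longrightarrow> s > 0 \<Longrightarrow> y_cf s r > s"
  using cf_num_convergents_tendsto(2) by (simp add: y_cf_def)

text \<open>\<open>w\<^sub>n = 2rn - s\<close> is a Bauer--Muir modifier for \<open>K(a\<^sub>n / 2s)\<close>: the transformed fraction has
  partial denominators \<open>2(s + 2r)\<close> and the same partial numerators, i.e.\ it is the fraction
  defining \<open>y(s + 2r, r)\<close>.\<close>

lemma cf_num_shift_identities:
  fixes r s :: real
  defines "w \<equiv> \<lambda>n::nat. 2*r*real n - s"
    and "a \<equiv> cf_num r" and "b \<equiv> 2 * s" and "b' \<equiv> 2 * (s + 2*r)"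
  shows "s * (cf_B a b (Suc n) + w n * cf_B a b n) + (cf_A a b (Suc n) + w n * cf_A a b n)
           = (s + 1) * (s + 2*r - 1) * cf_B a b' n"
    and "cf_B a b (Suc n) + w n * cf_B a b n = (s + 2*r) * cf_B a b' n + cf_A a b' n"
proof -
  define X where "X j = cf_B a b (Suc j) + w j * cf_B a b j" for j
  define Y where "Y j = cf_A a b (Suc j) + w j * cf_A a b j" for j
  have a_step: "a (Suc (Suc j)) = b' * w (Suc j) + a (Suc j) - b * w j" for j
    unfolding a_def b_def b'_def w_def cf_num_def by (simp add: algebra_simps power2_eq_square)
  have w_step: "w (Suc (Suc j)) = w j + (b' - b)" for j
    unfolding w_def b_def b'_def by (simp add: algebra_simps)
  have X: "X (Suc (Suc m)) = b' * X (Suc m) + a (Suc m) * X m" for m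
    unfolding X_def
    by (rule bauer_muir_recurrence[where U = "cf_B a b" and a = a and w = w and b = b and b' = b',
          OF _ a_step w_step]) simp
  have Y: "Y (Suc (Suc m)) = b' * Y (Suc m) + a (Suc m) * Y m" for m
    unfolding Y_def
    by (rule bauer_muir_recurrence[where U = "cf_A a b" and a = a and w = w and b = b and b' = b',
          OF _ a_step w_step]) simp
  have "s * X n + Y n - (s + 1) * (s + 2*r - 1) * cf_B a b' n = 0"
  proof (rule linear_recurrence_eq_0[where c = b' and d = "a \<circ> Suc"])
    show "s * X (Suc (Suc m)) + Y (Suc (Suc m)) - (s + 1) * (s + 2*r - 1) * cf_B a b' (Suc (Suc m))
        = b' * (s * X (Suc m) + Y (Suc m) - (s + 1) * (s + 2*r - 1) * cf_B a b' (Suc m))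
          + (a \<circ> Suc) m * (s * X m + Y m - (s + 1) * (s + 2*r - 1) * cf_B a b' m)" for m
      using X[of m] Y[of m] by (simp add: algebra_simps)
  qed (use cf_num_1[of r] in \<open>simp_all add: X_def Y_def w_def a_def b_def algebra_simps\<close>)
  then show "s * (cf_B a b (Suc n) + w n * cf_B a b n) + (cf_A a b (Suc n) + w n * cf_A a b n)
           = (s + 1) * (s + 2*r - 1) * cf_B a b' n"
    by (simp add: X_def Y_def)
  have "X n - (s + 2*r) * cf_B a b' n - cf_A a b' n = 0"
  proof (rule linear_recurrence_eq_0[where c = b' and d = "a \<circ> Suc"])
    show "X (Suc (Suc m)) - (s + 2*r) * cf_B a b' (Suc (Suc m)) - cf_A a b' (Suc (Suc m))
        = b' * (X (Suc m) - (s + 2*r) * cf_B a b' (Suc m) - cf_A a b' (Suc m))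
          + (a \<circ> Suc) m * (X m - (s + 2*r) * cf_B a b' m - cf_A a b' m)" for m
      using X[of m] by (simp add: algebra_simps)
  qed (simp_all add: X_def w_def b_def algebra_simps)
  then show "cf_B a b (Suc n) + w n * cf_B a b n = (s + 2*r) * cf_B a b' n + cf_A a b' n"
    by (simp add: X_def)
qed

lemma cf_num_modified_convergent_eq:
  fixes r s :: real
  assumes r: "r > 1/2" and s: "s > 0"
  defines "w \<equiv> \<lambda>m::nat. 2*r*real (Suc m) - s"
    and "a \<equiv> cf_num r" and "b \<equiv> 2 * s" and "b' \<equiv> 2 * (s + 2*r)"
  shows "s + (cf_A a b (Suc (Suc m)) + w m * cf_A a b (Suc m))
               / (cf_B a b (Suc (Suc m)) + w m * cf_B a b (Suc m))
           = (s + 1) * (s + 2*r - 1) / (s + 2*r + cf_convergent a b' m)"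
proof -
  define X where "X = cf_B a b (Suc (Suc m)) + w m * cf_B a b (Suc m)"
  define Y where "Y = cf_A a b (Suc (Suc m)) + w m * cf_A a b (Suc m)"
  define P where "P = (s + 1) * (s + 2*r - 1)"
  interpret cf': cf_positive a b'
    unfolding a_def b'_def using r s by (intro cf_positive_cf_num) auto
  note ids =
    cf_num_shift_identities[where r = r and s = s and n = "Suc m", folded a_def b_def b'_def]
  have num: "s * X + Y = P * cf'.B (Suc m)"
    using ids(1) by (simp add: X_def Y_def w_def P_def del: cf_A.simps cf_B.simps)
  have den: "X = (s + 2*r) * cf'.B (Suc m) + cf'.A (Suc m)"
    using ids(2) by (simp add: X_def w_def del: cf_A.simps cf_B.simps)
  have "X > 0"
    unfolding den using r s cf'.B_pos[of m] cf'.A_nonneg[of "Suc m"] by (simp add: add_pos_nonneg)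
  then have "s + Y / X = (s * X + Y) / X"
    by (simp add: field_simps)
  also have "\<dots> = P * cf'.B (Suc m) / X"
    by (simp only: num)
  also have "\<dots> = P / (s + 2*r + cf'.A (Suc m) / cf'.B (Suc m))"
    using cf'.B_pos[of m] by (simp add: den field_simps)
  finally show ?thesis
    by (simp add: X_def Y_def P_def cf'.cf_convergent_eq del: cf_A.simps cf_B.simps)
qed

lemma y_cf_mult_shift:
  assumes r: "r > 1/2" and s: "s > 0"
  shows "y_cf s r * y_cf (s + 2*r) r = (s + 1) * (s + 2*r - 1)"
proof -
  define a where "a = cf_num r"
  define b where "b = 2 * s"
  define b' where "b' = 2 * (s + 2*r)"
  define w where "w m = 2*r*real (Suc m) - s" for m
  have s': "s + 2*r > 0" using r s by simp
  interpret cf: cf_positive a b unfolding a_def b_def using r s by (rule cf_positive_cf_num)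
  have lim: "cf_convergent a b \<longlonglongrightarrow> cfrac a b"
    and lim': "cf_convergent a b' \<longlonglongrightarrow> cfrac a b'" and pos': "cfrac a b' > 0"
    unfolding a_def b_def b'_def using cf_num_convergents_tendsto r s s' by blast+
  define M where
    "M m = (cf.A (Suc (Suc m)) + w m * cf.A (Suc m)) / (cf.B (Suc (Suc m)) + w m * cf.B (Suc m))"
    for m
  have "eventually (\<lambda>m. w m \<ge> 0) sequentially"
    unfolding w_def using r by real_asymp
  then have "(\<lambda>m. s + M m) \<longlonglongrightarrow> s + cfrac a b"
    unfolding M_def by (intro tendsto_add tendsto_const cf.modified_convergents_tendsto lim)
  moreover have "(\<lambda>m. s + M m) \<longlonglongrightarrow> (s + 1) * (s + 2*r - 1) / (s + 2*r + cfrac a b')"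
    unfolding M_def w_def a_def b_def b'_def cf_num_modified_convergent_eq[OF r s]
    using s' pos' lim' unfolding a_def b'_def by (intro tendsto_intros) auto
  ultimately have "s + cfrac a b = (s + 1) * (s + 2*r - 1) / (s + 2*r + cfrac a b')"
    by (rule LIMSEQ_unique)
  then show ?thesis
    using s' pos' by (simp add: y_cf_def a_def b_def b'_def field_simps)
qed

section \<open>The closed form through the Gamma function\<close>

lemma ln_Gamma_real_plus1: "x > 0 \<Longrightarrow> ln_Gamma (x + 1) = ln x + ln_Gamma (x::real)"
proof -
  assume x: "x > 0"
  then have "x \<notin> \<int>\<^sub>\<le>\<^sub>0" by (auto elim!: nonpos_Ints_cases)
  then have "Gamma (x + 1) = x * Gamma x" by (rule Gamma_plus1)
  moreover have "ln (x * Gamma x) = ln x + ln (Gamma x)"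
    using x Gamma_real_pos[OF x] by (rule ln_mult_pos)
  ultimately show ?thesis
    using x by (simp add: ln_Gamma_real_pos)
qed

lemma ln_Gamma_midpoint_le:
  fixes x d :: real
  assumes "x > 0" and "d \<ge> 0"
  shows "2 * ln_Gamma (x + d) \<le> ln_Gamma x + ln_Gamma (x + 2*d)"
proof -
  have "(ln \<circ> Gamma) ((1 - 1/2) *\<^sub>R x + (1/2) *\<^sub>R (x + 2*d))
      \<le> (1 - 1/2) * (ln \<circ> Gamma) x + (1/2) * (ln \<circ> Gamma) (x + 2*d)"
    by (rule convex_onD[OF log_convex_Gamma_real]) (use assms in auto)
  moreover have "(1 - 1/2) *\<^sub>R x + (1/2) *\<^sub>R (x + 2*d) = x + d" by (simp add: field_simps)
  ultimately show ?thesis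
    using assms by (simp add: ln_Gamma_real_pos)
qed

definition ln_Gamma_half_shift :: "real \<Rightarrow> real" where
  "ln_Gamma_half_shift x = ln_Gamma (x + 1/2) - ln_Gamma x"

definition Digamma_half_shift :: "real \<Rightarrow> real" where
  "Digamma_half_shift x = Digamma (x + 1/2) - Digamma x"

lemma ln_Gamma_half_shift_add_half:
  assumes "x > 0"
  shows "ln_Gamma_half_shift x + ln_Gamma_half_shift (x + 1/2) = ln x"
proof -
  have "x + 1/2 + 1/2 = x + 1" by simp
  then show ?thesis
    unfolding ln_Gamma_half_shift_def by (simp only: ln_Gamma_real_plus1[OF assms])
qed

lemma Digamma_half_shift_add_half:
  assumes "x > 0"
  shows "Digamma_half_shift x + Digamma_half_shift (x + 1/2) = 1 / x"
proof -
  have "x + 1/2 + 1/2 = x + 1" by simp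
  then show ?thesis
    unfolding Digamma_half_shift_def using assms by (simp only: Digamma_plus1)
qed

lemma ln_Gamma_half_shift_bounds:
  assumes "x > 0"
  shows "2 * ln_Gamma_half_shift x \<le> ln x"
    and "2 * ln x - ln (x + 1/2) \<le> 2 * ln_Gamma_half_shift x"
proof -
  have "x + 2 * (1/2) = x + 1" "x + 1/2 + 1/2 = x + 1" "x + 1/2 + 2 * (1/2) = (x + 1/2) + 1"
    by simp_all
  then have "2 * ln_Gamma (x + 1/2) \<le> ln_Gamma x + ln_Gamma (x + 1)"
    and "2 * ln_Gamma (x + 1) \<le> ln_Gamma (x + 1/2) + ln_Gamma ((x + 1/2) + 1)"
    using ln_Gamma_midpoint_le[of x "1/2"] ln_Gamma_midpoint_le[of "x + 1/2" "1/2"] assms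
    by (simp_all only:)
  then show "2 * ln_Gamma_half_shift x \<le> ln x"
    and "2 * ln x - ln (x + 1/2) \<le> 2 * ln_Gamma_half_shift x"
    using ln_Gamma_real_plus1[of x] ln_Gamma_real_plus1[of "x + 1/2"] assms
    by (simp_all add: ln_Gamma_half_shift_def)
qed

lemma has_real_derivative_ln_Gamma_half_shift:
  "x > 0 \<Longrightarrow> (ln_Gamma_half_shift has_real_derivative Digamma_half_shift x) (at x)"
  unfolding ln_Gamma_half_shift_def[abs_def] Digamma_half_shift_def
  by (auto intro!: derivative_eq_intros)

lemma Digamma_half_shift_nonneg: "x > 0 \<Longrightarrow> Digamma_half_shift x \<ge> 0"
  unfolding Digamma_half_shift_def using Digamma_real_mono[of x "x + 1/2"] by simp

text \<open>\<open>y(s, r) = 4r \<Gamma>(\<alpha> + 1/2) \<Gamma>(\<beta> + 1/2) / (\<Gamma>(\<alpha>) \<Gamma>(\<beta>))\<close> with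
  \<open>\<alpha> = (s + 1) / 4r\<close> and \<open>\<beta> = (s + 2r - 1) / 4r\<close>.\<close>

definition ln_y_Gamma :: "real \<Rightarrow> real \<Rightarrow> real" where
  "ln_y_Gamma r s = ln (4*r) + ln_Gamma_half_shift ((s + 1) / (4*r))
                    + ln_Gamma_half_shift ((s + 2*r - 1) / (4*r))"

definition ln_y_Gamma_deriv :: "real \<Rightarrow> real \<Rightarrow> real" where
  "ln_y_Gamma_deriv r s =
     (Digamma_half_shift ((s + 1) / (4*r)) + Digamma_half_shift ((s + 2*r - 1) / (4*r))) / (4*r)"

context
  fixes r :: real
  assumes r: "r > 1/2"
begin

lemma ln_y_Gamma_shift:
  assumes "s > 0"
  shows "ln_y_Gamma r s + ln_y_Gamma r (s + 2*r) = ln (s + 1) + ln (s + 2*r - 1)"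
proof -
  define \<alpha> where "\<alpha> = (s + 1) / (4*r)"
  define \<beta> where "\<beta> = (s + 2*r - 1) / (4*r)"
  have "ln_y_Gamma r (s + 2*r) = ln (4*r) + ln_Gamma_half_shift (\<alpha> + 1/2)
                                 + ln_Gamma_half_shift (\<beta> + 1/2)"
    using r unfolding ln_y_Gamma_def \<alpha>_def \<beta>_def by (simp add: field_simps)
  moreover have "\<alpha> > 0" "\<beta> > 0" using assms r by (simp_all add: \<alpha>_def \<beta>_def)
  ultimately have "ln_y_Gamma r s + ln_y_Gamma r (s + 2*r) = 2 * ln (4*r) + ln \<alpha> + ln \<beta>"
    using ln_Gamma_half_shift_add_half[of \<alpha>] ln_Gamma_half_shift_add_half[of \<beta>]
    by (simp add: ln_y_Gamma_def \<alpha>_def[symmetric] \<beta>_def[symmetric])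
  then show ?thesis
    using assms r by (simp add: \<alpha>_def \<beta>_def ln_div)
qed

lemma ln_y_Gamma_bounds:
  assumes "s > 0"
  shows "2 * ln_y_Gamma r s \<le> ln (s + 1) + ln (s + 2*r - 1)"
    and "2 * ln (s + 1) + 2 * ln (s + 2*r - 1) - ln (s + 2*r + 1) - ln (s + 4*r - 1)
           \<le> 2 * ln_y_Gamma r s"
proof -
  define \<alpha> where "\<alpha> = (s + 1) / (4*r)"
  define \<beta> where "\<beta> = (s + 2*r - 1) / (4*r)"
  have pos: "\<alpha> > 0" "\<beta> > 0" using assms r by (simp_all add: \<alpha>_def \<beta>_def)
  have ln_ab: "ln \<alpha> = ln (s + 1) - ln (4*r)" "ln \<beta> = ln (s + 2*r - 1) - ln (4*r)"
    "ln (\<alpha> + 1/2) = ln (s + 2*r + 1) - ln (4*r)" "ln (\<beta> + 1/2) = ln (s + 4*r - 1) - ln (4*r)"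
    using assms r by (simp_all add: \<alpha>_def \<beta>_def ln_div field_simps)
  have L: "ln_y_Gamma r s = ln (4*r) + ln_Gamma_half_shift \<alpha> + ln_Gamma_half_shift \<beta>"
    by (simp add: ln_y_Gamma_def \<alpha>_def \<beta>_def)
  show "2 * ln_y_Gamma r s \<le> ln (s + 1) + ln (s + 2*r - 1)"
    using ln_Gamma_half_shift_bounds(1)[OF pos(1)] ln_Gamma_half_shift_bounds(1)[OF pos(2)]
    by (simp only: L ln_ab distrib_left right_diff_distrib; linarith)
  show "2 * ln (s + 1) + 2 * ln (s + 2*r - 1) - ln (s + 2*r + 1) - ln (s + 4*r - 1)
           \<le> 2 * ln_y_Gamma r s"
    using ln_Gamma_half_shift_bounds(2)[OF pos(1)] ln_Gamma_half_shift_bounds(2)[OF pos(2)]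
    by (simp only: L ln_ab distrib_left right_diff_distrib; linarith)
qed

lemma has_real_derivative_ln_y_Gamma:
  assumes "s > 0"
  shows "(ln_y_Gamma r has_real_derivative ln_y_Gamma_deriv r s) (at s)"
proof -
  have "(s + 1) / (4*r) > 0" "(s + 2*r - 1) / (4*r) > 0" using assms r by simp_all
  then show ?thesis
    unfolding ln_y_Gamma_def[abs_def] ln_y_Gamma_deriv_def using r
    by (auto intro!: derivative_eq_intros
        DERIV_chain2[OF has_real_derivative_ln_Gamma_half_shift] simp: field_simps)
qed

lemma ln_y_Gamma_deriv_shift:
  assumes "s > 0"
  shows "ln_y_Gamma_deriv r s + ln_y_Gamma_deriv r (s + 2*r) = 1 / (s + 1) + 1 / (s + 2*r - 1)"
proof -
  define \<alpha> where "\<alpha> = (s + 1) / (4*r)"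
  define \<beta> where "\<beta> = (s + 2*r - 1) / (4*r)"
  have "ln_y_Gamma_deriv r s + ln_y_Gamma_deriv r (s + 2*r)
      = ((Digamma_half_shift \<alpha> + Digamma_half_shift (\<alpha> + 1/2))
         + (Digamma_half_shift \<beta> + Digamma_half_shift (\<beta> + 1/2))) / (4*r)"
    using r unfolding ln_y_Gamma_deriv_def \<alpha>_def \<beta>_def by (simp add: field_simps)
  also have "\<dots> = (1 / \<alpha> + 1 / \<beta>) / (4*r)"
    using assms r by (simp add: Digamma_half_shift_add_half \<alpha>_def \<beta>_def)
  also have "\<dots> = 1 / (s + 1) + 1 / (s + 2*r - 1)"
  proof -
    have "\<alpha> * (4*r) = s + 1" "\<beta> * (4*r) = s + 2*r - 1" using r by (simp_all add: \<alpha>_def \<beta>_def)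
    then show ?thesis by (simp only: add_divide_distrib divide_divide_eq_left)
  qed
  finally show ?thesis .
qed

lemma ln_y_Gamma_deriv_nonneg: "s > 0 \<Longrightarrow> ln_y_Gamma_deriv r s \<ge> 0"
  using r unfolding ln_y_Gamma_deriv_def
  by (intro divide_nonneg_pos add_nonneg_nonneg Digamma_half_shift_nonneg) simp_all

end

section \<open>The functional equation and its unique solution\<close>

lemma antiperiodic_tendsto_0_imp_0:
  fixes h :: "real \<Rightarrow> real"
  assumes p: "p > 0" and anti: "\<And>t. t > 0 \<Longrightarrow> h (t + p) = - h t"
    and lim: "(h \<longlongrightarrow> 0) at_top" and s: "s > 0"
  shows "h s = 0"
proof -
  have abs_h: "\<bar>h (s + p * real k)\<bar> = \<bar>h s\<bar>" for k
  proof (induction k)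
    case (Suc k)
    have pos: "s + p * real k > 0" using p s by (simp add: add_pos_nonneg)
    have "h (s + p * real (Suc k)) = - h (s + p * real k)"
      using anti[OF pos] by (simp add: algebra_simps)
    then show ?case using Suc.IH by simp
  qed simp
  have "filterlim (\<lambda>k. s + p * real k) at_top sequentially"
    using p by real_asymp
  then have "(\<lambda>k. \<bar>h (s + p * real k)\<bar>) \<longlonglongrightarrow> 0"
    using filterlim_compose[OF lim] tendsto_rabs_zero by (auto simp: o_def)
  then show ?thesis
    unfolding abs_h by (simp add: LIMSEQ_const_iff)
qed

lemma ln_y_cf_eq_ln_y_Gamma:
  assumes r: "r > 1/2" and s: "s > 0"
  shows "ln (y_cf s r) = ln_y_Gamma r s"
proof -
  define \<phi> where "\<phi> t = ln (y_cf t r) - ln_y_Gamma r t" for t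
  have ln_y_shift: "ln (y_cf t r) + ln (y_cf (t + 2*r) r) = ln (t + 1) + ln (t + 2*r - 1)"
    if "t > 0" for t
  proof -
    have "t + 2*r > 0" using that r by simp
    then have "y_cf t r > 0" "y_cf (t + 2*r) r > 0"
      using y_cf_gt[OF r] that by (meson less_trans)+
    then show ?thesis
      using y_cf_mult_shift[OF r that] that r by (simp flip: ln_mult_pos)
  qed
  define lo where "lo t = 2 * ln t - ln (t + 1) - ln (t + 2*r - 1)" for t
  define up where "up t = ln (t + 2*r + 1) + ln (t + 4*r - 1) - 2 * ln (t + 2*r)" for t
  have bounds: "lo t \<le> 2 * \<phi> t \<and> 2 * \<phi> t \<le> up t" if "t > 0" for t
  proof -
    have "ln u < ln (y_cf u r)" if "u > 0" for u
      using that y_cf_gt[OF r that] by (subst ln_less_cancel_iff) auto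
    moreover have "t + 2*r > 0" using that r by simp
    ultimately have "ln t < ln (y_cf t r)" "ln (t + 2*r) < ln (y_cf (t + 2*r) r)"
      using that by blast+
    then show ?thesis
      using ln_y_shift[OF that] ln_y_Gamma_bounds[OF r that]
      unfolding \<phi>_def lo_def up_def right_diff_distrib by linarith
  qed
  have "((\<lambda>t. 2 * \<phi> t) \<longlongrightarrow> 0) at_top"
  proof (rule tendsto_sandwich)
    show "eventually (\<lambda>t. lo t \<le> 2 * \<phi> t) at_top"
      using eventually_gt_at_top[of 0] by eventually_elim (use bounds in blast)
    show "eventually (\<lambda>t. 2 * \<phi> t \<le> up t) at_top"
      using eventually_gt_at_top[of 0] by eventually_elim (use bounds in blast)
    show "(lo \<longlongrightarrow> 0) at_top" "(up \<longlongrightarrow> 0) at_top"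
      unfolding lo_def[abs_def] up_def[abs_def] using r by real_asymp+
  qed
  then have "((\<lambda>t. 1/2 * (2 * \<phi> t)) \<longlongrightarrow> 1/2 * 0) at_top"
    by (rule tendsto_mult_left)
  then have "(\<phi> \<longlongrightarrow> 0) at_top"
    by simp
  moreover have "\<phi> (t + 2*r) = - \<phi> t" if "t > 0" for t
    using ln_y_shift[OF that] ln_y_Gamma_shift[OF r that] unfolding \<phi>_def by simp
  ultimately have "\<phi> s = 0"
    using r s by (intro antiperiodic_tendsto_0_imp_0[of "2*r"]) auto
  then show ?thesis by (simp add: \<phi>_def)
qed

context
  fixes r :: real
  assumes r: "r > 1/2"
begin

lemma has_real_derivative_ln_y_cf:
  assumes "s > 0"
  shows "((\<lambda>t. ln (y_cf t r)) has_real_derivative ln_y_Gamma_deriv r s) (at s)"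
  by (rule has_field_derivative_transform_within_open[OF has_real_derivative_ln_y_Gamma[OF r assms]
        open_greaterThan]) (use assms ln_y_cf_eq_ln_y_Gamma[OF r] in auto)

lemma deriv_ln_y_cf: "s > 0 \<Longrightarrow> deriv (\<lambda>t. ln (y_cf t r)) s = ln_y_Gamma_deriv r s"
  by (rule DERIV_imp_deriv[OF has_real_derivative_ln_y_cf])

lemma continuous_on_y_cf: "continuous_on {0<..} (\<lambda>s. y_cf s r)"
proof -
  have "continuous_on {0<..} (\<lambda>s. exp (ln (y_cf s r)))"
    by (auto intro!: continuous_at_imp_continuous_on continuous_intros
        DERIV_isCont[OF has_real_derivative_ln_y_cf])
  moreover have "exp (ln (y_cf s r)) = y_cf s r" if "s > 0" for s
    using y_cf_gt[OF r that] that by simp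
  ultimately show ?thesis
    by (rule continuous_on_eq) simp
qed

lemma deriv_ln_y_cf_shift:
  assumes "s > 0"
  shows "deriv (\<lambda>t. ln (y_cf t r)) s + deriv (\<lambda>t. ln (y_cf t r)) (s + 2*r)
           = 1 / (s + 1) + 1 / (s + 2*r - 1)"
  using assms r by (simp add: deriv_ln_y_cf ln_y_Gamma_deriv_shift[OF r])

lemma deriv_ln_y_cf_tendsto_0: "((\<lambda>s. deriv (\<lambda>t. ln (y_cf t r)) s) \<longlongrightarrow> 0) at_top"
proof (rule tendsto_sandwich)
  show "eventually (\<lambda>s. 0 \<le> deriv (\<lambda>t. ln (y_cf t r)) s) at_top"
    using eventually_gt_at_top[of 0]
    by eventually_elim (simp add: deriv_ln_y_cf ln_y_Gamma_deriv_nonneg[OF r])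
  show "eventually (\<lambda>s. deriv (\<lambda>t. ln (y_cf t r)) s \<le> 1 / (s + 1) + 1 / (s + 2*r - 1)) at_top"
    using eventually_gt_at_top[of 0]
  proof eventually_elim
    case (elim s)
    then have "s + 2*r > 0" using r by simp
    then show ?case
      using deriv_ln_y_cf_shift[OF elim] deriv_ln_y_cf ln_y_Gamma_deriv_nonneg[OF r] by force
  qed
  show "((\<lambda>s. 1 / (s + 1) + 1 / (s + 2*r - 1)) \<longlongrightarrow> 0) at_top"
    by real_asymp
qed simp

lemma deriv_ln_y_cf_unique:
  assumes fe: "\<forall>s>0. f s + f (s + 2*r) = 1 / (s + 1) + 1 / (s + 2*r - 1)"
    and lim: "(f \<longlongrightarrow> 0) at_top" and "s > 0"
  shows "f s = deriv (\<lambda>t. ln (y_cf t r)) s"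
proof -
  define h where "h t = f t - deriv (\<lambda>t. ln (y_cf t r)) t" for t
  have "h s = 0"
  proof (rule antiperiodic_tendsto_0_imp_0[where h = h and p = "2*r"])
    show "h (t + 2*r) = - h t" if "t > 0" for t
      using fe deriv_ln_y_cf_shift[OF that] that unfolding h_def by (simp add: algebra_simps)
    show "(h \<longlongrightarrow> 0) at_top"
      unfolding h_def[abs_def] using tendsto_diff[OF lim deriv_ln_y_cf_tendsto_0] by simp
  qed (use r \<open>s > 0\<close> in auto)
  then show ?thesis by (simp add: h_def)
qed

end

theorem lemma2:
  fixes r :: real
  assumes r: "r > 1/2"
  shows "(\<forall>s>0. convergent (cf_convergent (cf_num r) (2 * s)))
    \<and> (\<forall>s>0. y_cf s r > 0)
    \<and> continuous_on {0<..} (\<lambda>s. y_cf s r)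
    \<and> (\<forall>s>0. y_cf s r > s)
    \<and> (\<forall>s>0. y_cf s r * y_cf (s + 2*r) r = (s + 1) * (s + 2*r - 1))
    \<and> (\<forall>s>0. (\<lambda>t. ln (y_cf t r)) differentiable (at s))
    \<and> (\<forall>s>0. deriv (\<lambda>t. ln (y_cf t r)) s + deriv (\<lambda>t. ln (y_cf t r)) (s + 2*r)
               = 1/(s+1) + 1/(s + 2*r - 1))
    \<and> ((\<lambda>s. deriv (\<lambda>t. ln (y_cf t r)) s) \<longlongrightarrow> 0) at_top
    \<and> (\<forall>f :: real \<Rightarrow> real.
          (\<forall>s>0. f s + f (s + 2*r) = 1/(s+1) + 1/(s + 2*r - 1))
          \<and> (f \<longlongrightarrow> 0) at_top
          \<longrightarrow> (\<forall>s>0. f s = deriv (\<lambda>t. ln (y_cf t r)) s))"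
proof -
  have "y_cf s r > 0" if "s > 0" for s
    using y_cf_gt[OF r that] that by simp
  moreover have "(\<lambda>t. ln (y_cf t r)) differentiable (at s)" if "s > 0" for s
    using has_real_derivative_ln_y_cf[OF r that] by (auto simp: real_differentiable_def)
  ultimately show ?thesis
    using cf_num_convergents_tendsto(1)[OF r] y_cf_gt[OF r] continuous_on_y_cf[OF r]
      y_cf_mult_shift[OF r] deriv_ln_y_cf_shift[OF r] deriv_ln_y_cf_tendsto_0[OF r]
      deriv_ln_y_cf_unique[OF r]
    by (auto simp: convergent_def)
qed

end
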